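(* For every $m\ge1$ and every $n\ge\lfloor m/2\rfloor+m$, there exist $m$ preference lists on the ground set $\{1,\ldots,n\}$ for which the number of distinct images of efficient matchings is $\Omega\!\left(\frac{2^m}{\sqrt{m}}\right)$ (with the implied constant independent of $m,n$).
   Context: A system of $m$ preference lists on $\{1,\ldots,n\}$ assigns to each $i\in\{1,\ldots,m\}$ a list $L(i)$, a strict total ordering of $\{1,\ldots,n\}$. A matching is an injective map $\pi:\{1,\ldots,m\}\to\{1,\ldots,n\}$, and its image is the set $\pi(\{1,\ldots,m\})$. A matching $\pi$ is better than a distinct matching $\sigma$ if for each $i$ either $\pi(i)=\sigma(i)$ or $\pi(i)$ appears before $\sigma(i)$ in $L(i)$. A matching is efficient if no matching is better than it. *)

theory Defs
  imports Complex_Main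
begin

definition appears_before :: "nat list \<Rightarrow> nat \<Rightarrow> nat \<Rightarrow> bool" where
  "appears_before xs x y \<longleftrightarrow> (\<exists>j k. j < k \<and> k < length xs \<and> xs ! j = x \<and> xs ! k = y)"

definition pref_system :: "nat \<Rightarrow> nat \<Rightarrow> (nat \<Rightarrow> nat list) \<Rightarrow> bool" where
  "pref_system m n L \<longleftrightarrow> (\<forall>i\<in>{1..m}. distinct (L i) \<and> set (L i) = {1..n})"

definition is_matching :: "nat \<Rightarrow> nat \<Rightarrow> (nat \<Rightarrow> nat) \<Rightarrow> bool" where
  "is_matching m n \<pi> \<longleftrightarrow> inj_on \<pi> {1..m} \<and> \<pi> ` {1..m} \<subseteq> {1..n}"

definition better :: "(nat \<Rightarrow> nat list) \<Rightarrow> nat \<Rightarrow> (nat \<Rightarrow> nat) \<Rightarrow> (nat \<Rightarrow> nat) \<Rightarrow> bool" where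
  "better L m \<pi> \<sigma> \<longleftrightarrow> (\<exists>i\<in>{1..m}. \<pi> i \<noteq> \<sigma> i) \<and>
     (\<forall>i\<in>{1..m}. \<pi> i = \<sigma> i \<or> appears_before (L i) (\<pi> i) (\<sigma> i))"

definition efficient :: "(nat \<Rightarrow> nat list) \<Rightarrow> nat \<Rightarrow> nat \<Rightarrow> (nat \<Rightarrow> nat) \<Rightarrow> bool" where
  "efficient L m n \<pi> \<longleftrightarrow> is_matching m n \<pi> \<and> \<not> (\<exists>\<sigma>. is_matching m n \<sigma> \<and> better L m \<sigma> \<pi>)"

definition efficient_images :: "(nat \<Rightarrow> nat list) \<Rightarrow> nat \<Rightarrow> nat \<Rightarrow> nat set set" where
  "efficient_images L m n = {\<pi> ` {1..m} | \<pi>. efficient L m n \<pi>}"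

end

theory Submission
  imports Defs
begin

text \<open>Let \<open>k = \<lfloor>m/2\<rfloor>\<close>. Every agent \<open>i\<close> ranks the common objects \<open>1, \<dots>, k\<close> first, in
  the same order, and then its private object \<open>k + i\<close>. For each \<open>k\<close>-subset \<open>T\<close> of
  the agents, matching \<open>T\<close> bijectively onto the common objects and every other agent to its
  private object is efficient, and its image \<open>{1..k} \<union> {k + i | i \<notin> T}\<close> determines \<open>T\<close>.
  So there are at least \<open>m choose k\<close> efficient images, and
  \<open>m choose k \<ge> 2^m / (2 \<surd>m)\<close> follows by induction from
  \<open>(k + 1) (2k + 2 choose k + 1) = 2 (2k + 1) (2k choose k)\<close>.\<close>

lemma central_binomial_Suc:
  "Suc n * (2 * Suc n choose Suc n) = 2 * (2 * n + 1) * (2 * n choose n)"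
proof -
  let ?B = "2 * n + 1 choose n"
  have D: "Suc n * (2 * Suc n choose Suc n) = (2 * n + 2) * ?B"
    using Suc_times_binomial[of n "2 * n + 1"] by simp
  have B: "Suc n * ?B = (2 * n + 1) * (2 * n choose n)"
    using Suc_times_binomial[of n "2 * n"] binomial_symmetric[of n "2 * n + 1"] by simp
  have "Suc n * (Suc n * (2 * Suc n choose Suc n)) = (2 * n + 2) * (Suc n * ?B)"
    unfolding D by (simp only: ac_simps)
  also have "\<dots> = Suc n * (2 * (2 * n + 1) * (2 * n choose n))"
    unfolding B by (simp add: algebra_simps)
  finally show ?thesis by (metis mult_left_cancel Suc_neq_Zero)
qed

lemma central_binomial_square_lower_bound:
  assumes "1 \<le> n" shows "16 ^ n \<le> 4 * n * (2 * n choose n)\<^sup>2"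
  using assms
proof (induction n rule: dec_induct)
  case base then show ?case by (simp add: numeral_eq_Suc)
next
  case (step n)
  let ?C = "2 * n choose n" and ?D = "2 * Suc n choose Suc n"
  have "16 ^ Suc n * Suc n \<le> 16 * (4 * n * ?C\<^sup>2) * Suc n"
    using step.IH by (intro mult_right_mono) simp_all
  also have "\<dots> = 16 * ?C\<^sup>2 * (4 * n * Suc n)"
    by (simp only: ac_simps)
  also have "\<dots> \<le> 16 * ?C\<^sup>2 * (2 * n + 1)\<^sup>2"
    by (intro mult_left_mono) (simp_all add: power2_eq_square)
  also have "\<dots> = 4 * (2 * (2 * n + 1) * ?C)\<^sup>2"
    by (simp add: power2_eq_square algebra_simps)
  also have "\<dots> = 4 * Suc n * ?D\<^sup>2 * Suc n"
    unfolding central_binomial_Suc[symmetric] by (simp only: power2_eq_square ac_simps)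
  finally show ?case by (simp only: mult_le_cancel2 zero_less_Suc simp_thms)
qed

lemma central_binomial_Suc_eq_double: "2 * Suc n choose Suc n = 2 * (2 * n + 1 choose n)"
  using central_binomial_odd[of "2 * n + 1"] by simp

lemma middle_binomial_square_lower_bound:
  assumes "1 \<le> m" shows "4 ^ m \<le> 4 * m * (m choose (m div 2))\<^sup>2"
proof (cases "even m")
  case True
  then obtain k where m: "m = 2 * k" by blast
  have "(4::nat) ^ m = 16 ^ k" by (simp add: m power_mult)
  with assms show ?thesis using central_binomial_square_lower_bound[of k] by (simp add: m)
next
  case False
  then obtain k where m: "m = 2 * k + 1" using oddE by blast
  have "4 * 4 ^ m = (16::nat) ^ Suc k" by (simp add: m power_mult power_add)
  also have "\<dots> \<le> 4 * Suc k * (2 * Suc k choose Suc k)\<^sup>2"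
    by (rule central_binomial_square_lower_bound) simp
  also have "\<dots> = 4 * (4 * Suc k * (m choose (m div 2))\<^sup>2)"
    by (simp only: central_binomial_Suc_eq_double m) (simp add: power2_eq_square)
  also have "\<dots> \<le> 4 * (4 * m * (m choose (m div 2))\<^sup>2)"
    by (simp add: m)
  finally show ?thesis by simp
qed

lemma middle_binomial_lower_bound:
  assumes "1 \<le> m" shows "2 ^ m / (2 * sqrt (real m)) \<le> real (m choose (m div 2))"
proof -
  let ?C = "real (m choose (m div 2))"
  have "((2::real) ^ m)\<^sup>2 = real (4 ^ m)"
    by (simp add: power_mult_distrib[symmetric] power2_eq_square)
  also have "\<dots> \<le> real (4 * m * (m choose (m div 2))\<^sup>2)"
    using middle_binomial_square_lower_bound[OF assms] by (simp only: of_nat_le_iff)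
  also have "\<dots> = (2 * sqrt (real m) * ?C)\<^sup>2"
    by (simp add: power_mult_distrib)
  finally have "2 ^ m \<le> 2 * sqrt (real m) * ?C"
    by (rule power2_le_imp_le) simp
  with assms show ?thesis by (simp add: divide_le_eq ac_simps)
qed

lemma appears_before_nth:
  assumes "distinct xs" "k < length xs" "appears_before xs x (xs ! k)"
  shows "\<exists>j<k. xs ! j = x"
  using assms nth_eq_iff_index_eq unfolding appears_before_def by metis

definition shared_prefix_pref :: "nat \<Rightarrow> nat \<Rightarrow> nat \<Rightarrow> nat list" where
  "shared_prefix_pref k n i = [1..<k+1] @ (k + i) # filter (\<lambda>x. x \<noteq> k + i) [k+1..<n+1]"

lemma pref_system_shared_prefix_pref:
  "k + m \<le> n \<Longrightarrow> pref_system m n (shared_prefix_pref k n)"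
  by (auto simp: pref_system_def shared_prefix_pref_def)

lemma shared_prefix_pref_nth:
  "j < k \<Longrightarrow> shared_prefix_pref k n i ! j = j + 1"
  "shared_prefix_pref k n i ! k = k + i"
  by (simp_all add: shared_prefix_pref_def nth_append del: upt_Suc)

lemma appears_before_shared_prefix_pref_own:
  assumes "1 \<le> i" "appears_before (shared_prefix_pref k n i) x (k + i)"
  shows "x \<in> {1..k}"
proof -
  have "distinct (shared_prefix_pref k n i)" "k < length (shared_prefix_pref k n i)"
    using assms(1) by (auto simp: shared_prefix_pref_def)
  then obtain j where "j < k" "shared_prefix_pref k n i ! j = x"
    using appears_before_nth assms(2) by (metis shared_prefix_pref_nth(2))
  then show ?thesis by (auto simp: shared_prefix_pref_nth)
qed

lemma appears_before_shared_prefix_pref_shared: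
  assumes "1 \<le> i" "y \<in> {1..k}" "appears_before (shared_prefix_pref k n i) x y"
  shows "x \<in> {1..k} \<and> x < y"
proof -
  have y: "shared_prefix_pref k n i ! (y - 1) = y"
    using assms(2) by (auto simp: shared_prefix_pref_nth)
  have "distinct (shared_prefix_pref k n i)" "y - 1 < length (shared_prefix_pref k n i)"
    using assms(1,2) by (auto simp: shared_prefix_pref_def)
  then obtain j where "j < y - 1" "shared_prefix_pref k n i ! j = x"
    using appears_before_nth assms(3) y by metis
  with assms(2) show ?thesis by (auto simp: shared_prefix_pref_nth)
qed

lemma pointwise_le_same_image_eq:
  fixes f g :: "'a \<Rightarrow> 'b::ordered_cancel_comm_monoid_add"
  assumes "finite A" "inj_on f A" "inj_on g A" "g ` A = f ` A" "\<forall>i\<in>A. g i \<le> f i"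
  shows "\<forall>i\<in>A. g i = f i"
proof (rule ccontr)
  assume "\<not> (\<forall>i\<in>A. g i = f i)"
  with assms(5) have "sum g A < sum f A"
    by (intro sum_strict_mono_ex1[OF assms(1)]) (auto simp: order.strict_iff_order)
  moreover have "sum g A = sum f A"
    using sum.reindex[OF assms(2), of id] sum.reindex[OF assms(3), of id] assms(4) by simp
  ultimately show False by simp
qed

lemma finite_efficient_images: "finite (efficient_images L m n)"
proof (rule finite_subset)
  show "efficient_images L m n \<subseteq> Pow {1..n}"
    by (auto simp: efficient_images_def efficient_def is_matching_def)
qed simp

definition shared_prefix_matching :: "nat set \<Rightarrow> (nat \<Rightarrow> nat) \<Rightarrow> nat \<Rightarrow> nat \<Rightarrow> nat" where
  "shared_prefix_matching T f k i = (if i \<in> T then f i else k + i)"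

lemma is_matching_shared_prefix_matching:
  assumes "bij_betw f T {1..k}" "k + m \<le> n"
  shows "is_matching m n (shared_prefix_matching T f k)"
proof -
  have fT: "f i \<in> {1..k}" if "i \<in> T" for i
    using bij_betw_apply[OF assms(1) that] .
  have "inj_on (shared_prefix_matching T f k) {1..m}"
  proof (rule inj_onI)
    fix i j assume "i \<in> {1..m}" "j \<in> {1..m}" "shared_prefix_matching T f k i = shared_prefix_matching T f k j"
    with fT[of i] fT[of j] bij_betw_imp_inj_on[OF assms(1)] show "i = j"
      by (auto simp: shared_prefix_matching_def inj_on_def split: if_splits)
  qed
  moreover have "shared_prefix_matching T f k ` {1..m} \<subseteq> {1..n}"
    using fT assms(2) by (fastforce simp: shared_prefix_matching_def)
  ultimately show ?thesis
    by (simp add: is_matching_def)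
qed

lemma better_than_shared_prefix_matching_pointwise:
  assumes T: "T \<subseteq> {1..m}" and f: "bij_betw f T {1..k}"
    and \<sigma>: "better (shared_prefix_pref k n) m \<sigma> (shared_prefix_matching T f k)"
  shows "j \<in> T \<Longrightarrow> \<sigma> j \<in> {1..k} \<and> \<sigma> j \<le> f j"
    and "j \<in> {1..m} \<Longrightarrow> j \<notin> T \<Longrightarrow> \<sigma> j = k + j \<or> \<sigma> j \<in> {1..k}"
proof -
  let ?\<pi> = "shared_prefix_matching T f k"
  have pref: "\<sigma> j = ?\<pi> j \<or> appears_before (shared_prefix_pref k n j) (\<sigma> j) (?\<pi> j)"
    if "j \<in> {1..m}" for j
    using \<sigma> that by (simp add: better_def)
  show "\<sigma> j \<in> {1..k} \<and> \<sigma> j \<le> f j" if "j \<in> T"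
  proof -
    have j: "j \<in> {1..m}" "?\<pi> j = f j"
      using that T by (auto simp: shared_prefix_matching_def)
    with pref[OF j(1)] show ?thesis
      using appears_before_shared_prefix_pref_shared[of j "f j" k n "\<sigma> j"] bij_betw_apply[OF f that]
      by auto
  qed
  show "\<sigma> j = k + j \<or> \<sigma> j \<in> {1..k}" if "j \<in> {1..m}" "j \<notin> T"
  proof -
    have "?\<pi> j = k + j"
      using that(2) by (simp add: shared_prefix_matching_def)
    with pref[OF that(1)] show ?thesis
      using appears_before_shared_prefix_pref_own[of j k n "\<sigma> j"] that(1) by auto
  qed
qed

text \<open>Agents outside \<open>T\<close> can only trade their own object for one of \<open>1..k\<close>, so an
  injective improvement \<open>\<sigma>\<close> still maps \<open>T\<close> onto \<open>1..k\<close>; being pointwise below \<open>f\<close>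
  there, it coincides with \<open>f\<close>.\<close>

lemma better_than_shared_prefix_matching_imp_eq:
  assumes T: "T \<subseteq> {1..m}" and f: "bij_betw f T {1..k}"
    and \<sigma>: "is_matching m n \<sigma>" "better (shared_prefix_pref k n) m \<sigma> (shared_prefix_matching T f k)"
    and i: "i \<in> {1..m}"
  shows "\<sigma> i = shared_prefix_matching T f k i"
proof -
  note \<sigma>_T = better_than_shared_prefix_matching_pointwise(1)[OF T f \<sigma>(2)]
  note \<sigma>_not_T = better_than_shared_prefix_matching_pointwise(2)[OF T f \<sigma>(2)]
  have \<sigma>_inj: "inj_on \<sigma> {1..m}"
    using \<sigma>(1) by (simp add: is_matching_def)
  have finite_T: "finite T"
    using T finite_subset by blast
  have \<sigma>_T_inj: "inj_on \<sigma> T"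
    using \<sigma>_inj T inj_on_subset by blast
  have \<sigma>_image: "\<sigma> ` T = {1..k}"
  proof (rule card_subset_eq)
    show "\<sigma> ` T \<subseteq> {1..k}" using \<sigma>_T by auto
    show "card (\<sigma> ` T) = card {1..k}"
      using card_image[OF \<sigma>_T_inj] bij_betw_same_card[OF f] by simp
  qed simp
  show ?thesis
  proof (cases "i \<in> T")
    case True
    have "\<forall>j\<in>T. \<sigma> j = f j"
    proof (rule pointwise_le_same_image_eq[OF finite_T _ \<sigma>_T_inj])
      show "inj_on f T" "\<sigma> ` T = f ` T"
        using f \<sigma>_image by (simp_all add: bij_betw_def)
      show "\<forall>j\<in>T. \<sigma> j \<le> f j"
        using \<sigma>_T by blast
    qed
    with True show ?thesis by (simp add: shared_prefix_matching_def)
  next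
    case False
    have "\<sigma> i \<notin> \<sigma> ` T"
    proof
      assume "\<sigma> i \<in> \<sigma> ` T"
      then obtain j where "j \<in> T" "\<sigma> j = \<sigma> i" by (metis imageE)
      with inj_onD[OF \<sigma>_inj] T i False show False by blast
    qed
    with \<sigma>_not_T[OF i False] \<sigma>_image False show ?thesis
      by (auto simp: shared_prefix_matching_def)
  qed
qed

lemma efficient_shared_prefix_matching:
  assumes "T \<subseteq> {1..m}" "bij_betw f T {1..k}" "k + m \<le> n"
  shows "efficient (shared_prefix_pref k n) m n (shared_prefix_matching T f k)"
  using is_matching_shared_prefix_matching[OF assms(2,3)]
    better_than_shared_prefix_matching_imp_eq[OF assms(1,2)]
  unfolding efficient_def better_def by blast

lemma binomial_le_card_efficient_images:
  assumes n: "k + m \<le> n"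
  shows "m choose k \<le> card (efficient_images (shared_prefix_pref k n) m n)"
proof -
  let ?S = "{T. T \<subseteq> {1..m} \<and> card T = k}"
  define image_of where "image_of T = {1..k} \<union> (+) k ` ({1..m} - T)" for T
  have images: "image_of T \<in> efficient_images (shared_prefix_pref k n) m n" if "T \<in> ?S" for T
  proof -
    have T: "T \<subseteq> {1..m}" "card T = k"
      using that by auto
    then obtain f where f: "bij_betw f T {1..k}"
      using finite_same_card_bij[of T "{1..k}"] finite_subset by fastforce
    let ?\<pi> = "shared_prefix_matching T f k"
    have "?\<pi> ` {1..m} = f ` T \<union> (+) k ` ({1..m} - T)"
      using T(1) by (auto simp: shared_prefix_matching_def)
    then have "?\<pi> ` {1..m} = image_of T"
      using bij_betw_imp_surj_on[OF f] by (simp add: image_of_def)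
    with efficient_shared_prefix_matching[OF T(1) f n] show ?thesis
      unfolding efficient_images_def by blast
  qed
  have inj: "inj_on image_of ?S"
  proof (rule inj_onI)
    fix A B assume A: "A \<in> ?S" and B: "B \<in> ?S" and eq: "image_of A = image_of B"
    have "image_of T - {1..k} = (+) k ` ({1..m} - T)" for T
      by (auto simp: image_of_def)
    with eq have "(+) k ` ({1..m} - A) = (+) k ` ({1..m} - B)"
      by metis
    then have "{1..m} - A = {1..m} - B"
      by (simp add: inj_image_eq_iff)
    with A B show "A = B" by blast
  qed
  have "card ?S \<le> card (efficient_images (shared_prefix_pref k n) m n)"
    using images by (intro card_inj_on_le[OF inj _ finite_efficient_images]) blast
  then show ?thesis
    using n_subsets[of "{1..m}" k] by simp
qed

theorem proposition1:
  shows "\<exists>c::real. c > 0 \<and>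
    (\<forall>m n::nat. 1 \<le> m \<longrightarrow> m div 2 + m \<le> n \<longrightarrow>
       (\<exists>L. pref_system m n L \<and>
            real (card (efficient_images L m n)) \<ge> c * 2 ^ m / sqrt (real m)))"
proof (intro exI[of _ "1/2"] conjI allI impI)
  fix m n :: nat
  assume m: "1 \<le> m" and n: "m div 2 + m \<le> n"
  let ?L = "shared_prefix_pref (m div 2) n"
  have "1/2 * 2 ^ m / sqrt (real m) \<le> real (m choose (m div 2))"
    using middle_binomial_lower_bound[OF m] by simp
  also have "\<dots> \<le> real (card (efficient_images ?L m n))"
    using binomial_le_card_efficient_images[OF n] by simp
  finally show "\<exists>L. pref_system m n L \<and> 1/2 * 2 ^ m / sqrt (real m) \<le> real (card (efficient_images L m n))"
    using pref_system_shared_prefix_pref[OF n] by blast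
qed simp

end
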